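(* Let $\mathcal Q$ be a set of probability measures and $(\mathtt Q_i)_{i\in I}\subseteq\mathcal Q$ a family such that for every $t\in\mathbb N_0$ and $A\in\mathcal F_t$: if $\mathtt Q(A)>0$ for some $\mathtt Q\in\mathcal Q$, then $\mathtt Q_i(A)>0$ for some $i\in I$. Then: (1) if $(\mathfrak p_t)$ is an anytime-valid $p$-value for $\mathcal Q$ and is $\mathtt Q_i$-admissible for each $i\in I$, then it is $\mathcal Q$-admissible; (2) if $(\mathfrak e_t)$ is an anytime-valid $e$-value for $\mathcal Q$ and is $\mathtt Q_i$-admissible for each $i\in I$, then it is $\mathcal Q$-admissible; (3) if $(\psi_t)$ is a $(\mathcal Q,\alpha)$-sequential test and is $\mathtt Q_i$-admissible (as a $(\{\mathtt Q_i\},\alpha)$-sequential test) for each $i\in I$, then it is $\mathcal Q$-admissible.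
   Context: Setup: observations $(X_t)_{t\in\mathbb N}$, an independent $[0,1]$-uniform $U$, filtration $\mathcal F_0=\sigma(U)$, $\mathcal F_t=\sigma(U,X_1,\dots,X_t)$, $\mathcal F_\infty=\sigma(\bigcup_t\mathcal F_t)$; stopping times may be infinite. - Anytime-valid $p$-value for $\mathcal Q$: adapted $[0,1]$-valued $(\mathfrak p_t)_{t\in\mathbb N_0}$ with $\mathtt Q(\mathfrak p_\tau\le\alpha)\le\alpha$ for all stopping times $\tau$, $\mathtt Q\in\mathcal Q$, $\alpha\in[0,1]$ ($\mathfrak p_\infty:=\liminf_t\mathfrak p_t$). Anytime-valid $e$-value: adapted $[0,\infty]$-valued with $\mathtt E_{\mathtt Q}[\mathfrak e_\tau]\le1$ for all stopping times and $\mathtt Q\in\mathcal Q$ ($\mathfrak e_\infty:=\limsup$). $(\mathcal Q,\alpha)$-sequential test: adapted $\{0,1\}$-valued with $\mathtt Q(\psi_\tau=1)\le\alpha$ for all stopping times and $\mathtt Q\in\mathcal Q$. - Admissibility: a $\mathcal Q$-valid $(\mathfrak p_t)$ is $\mathcal Q$-inadmissible if there is a $\mathcal Q$-valid $(\mathfrak p'_t)$ with $\mathtt Q(\mathfrak p'_t\le\mathfrak p_t)=1$ for all $t\in\mathbb N_0$, $\mathtt Q\in\mathcal Q$, and $\mathtt Q(\mathfrak p'_t<\mathfrak p_t)>0$ for some $t$ and some $\mathtt Q\in\mathcal Q$; $\mathcal Q$-admissible otherwise. Analogously for $e$-values and sequential tests with reversed inequalities. For $\mathcal Q=\{\mathtt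 Q\}$ we say $\mathtt Q$-admissible. *)

theory Defs
  imports "HOL-Probability.Probability"
begin

text \<open>Sample space: a point is (u, x) where u is the value of the uniform variable U
 and x i is the observation X_(i+1) (observations are indexed 1,2,...).\<close>

type_synonym 'x omega = "real \<times> (nat \<Rightarrow> 'x)"

definition Omega :: "'x measure \<Rightarrow> 'x omega measure" where
  "Omega S = (borel :: real measure) \<Otimes>\<^sub>M (\<Pi>\<^sub>M i\<in>(UNIV::nat set). S)"

definition filt :: "'x measure \<Rightarrow> nat \<Rightarrow> 'x omega measure" where
  "filt S t = vimage_algebra (space (Omega S))
      (\<lambda>\<omega>. (fst \<omega>, restrict (snd \<omega>) {..<t}))
      ((borel :: real measure) \<Otimes>\<^sub>M (\<Pi>\<^sub>M i\<in>{..<t}. S))"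

definition filt_inf :: "'x measure \<Rightarrow> 'x omega measure" where
  "filt_inf S = sigma (space (Omega S)) (\<Union>t. sets (filt S t))"

definition model_measure :: "'x measure \<Rightarrow> 'x omega measure \<Rightarrow> bool" where
  "model_measure S Q \<longleftrightarrow> prob_space Q \<and> sets Q = sets (filt_inf S) \<and>
     distr Q borel fst = uniform_measure lborel {0..1::real} \<and>
     (\<forall>A \<in> sets (borel :: real measure). \<forall>B \<in> sets (\<Pi>\<^sub>M i\<in>(UNIV::nat set). S).
        measure Q (fst -` A \<inter> snd -` B \<inter> space Q)
          = measure Q (fst -` A \<inter> space Q) * measure Q (snd -` B \<inter> space Q))"

definition stopping_time_F :: "'x measure \<Rightarrow> ('x omega \<Rightarrow> enat) \<Rightarrow> bool" where
  "stopping_time_F S \<tau> \<longleftrightarrow> (\<forall>t::nat. {\<omega> \<in> space (Omega S). \<tau> \<omega> \<le> enat t} \<in> sets (filt S t))"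

definition adapted_F :: "'x measure \<Rightarrow> 'b::topological_space measure \<Rightarrow> (nat \<Rightarrow> 'x omega \<Rightarrow> 'b) \<Rightarrow> bool" where
  "adapted_F S N f \<longleftrightarrow> (\<forall>t. f t \<in> measurable (filt S t) N)"

definition p_at :: "(nat \<Rightarrow> 'w \<Rightarrow> real) \<Rightarrow> ('w \<Rightarrow> enat) \<Rightarrow> 'w \<Rightarrow> ereal" where
  "p_at p \<tau> \<omega> = (if \<tau> \<omega> = \<infinity> then liminf (\<lambda>t. ereal (p t \<omega>)) else ereal (p (the_enat (\<tau> \<omega>)) \<omega>))"

definition e_at :: "(nat \<Rightarrow> 'w \<Rightarrow> ennreal) \<Rightarrow> ('w \<Rightarrow> enat) \<Rightarrow> 'w \<Rightarrow> ennreal" where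
  "e_at e \<tau> \<omega> = (if \<tau> \<omega> = \<infinity> then limsup (\<lambda>t. e t \<omega>) else e (the_enat (\<tau> \<omega>)) \<omega>)"

definition psi_at :: "(nat \<Rightarrow> 'w \<Rightarrow> bool) \<Rightarrow> ('w \<Rightarrow> enat) \<Rightarrow> 'w \<Rightarrow> bool" where
  "psi_at psi \<tau> \<omega> = (if \<tau> \<omega> = \<infinity> then limsup (\<lambda>t. psi t \<omega>) else psi (the_enat (\<tau> \<omega>)) \<omega>)"

definition pval_valid :: "'x measure \<Rightarrow> 'x omega measure set \<Rightarrow> (nat \<Rightarrow> 'x omega \<Rightarrow> real) \<Rightarrow> bool" where
  "pval_valid S \<Q> p \<longleftrightarrow> adapted_F S borel p \<and>
     (\<forall>t \<omega>. \<omega> \<in> space (Omega S) \<longrightarrow> p t \<omega> \<in> {0..1}) \<and>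
     (\<forall>\<tau> Q \<alpha>. stopping_time_F S \<tau> \<longrightarrow> Q \<in> \<Q> \<longrightarrow> \<alpha> \<in> {0..1} \<longrightarrow>
        measure Q {\<omega> \<in> space Q. p_at p \<tau> \<omega> \<le> ereal \<alpha>} \<le> \<alpha>)"

definition eval_valid :: "'x measure \<Rightarrow> 'x omega measure set \<Rightarrow> (nat \<Rightarrow> 'x omega \<Rightarrow> ennreal) \<Rightarrow> bool" where
  "eval_valid S \<Q> e \<longleftrightarrow> adapted_F S borel e \<and>
     (\<forall>\<tau> Q. stopping_time_F S \<tau> \<longrightarrow> Q \<in> \<Q> \<longrightarrow> (\<integral>\<^sup>+ \<omega>. e_at e \<tau> \<omega> \<partial>Q) \<le> 1)"

definition seqtest_valid :: "'x measure \<Rightarrow> 'x omega measure set \<Rightarrow> real \<Rightarrow> (nat \<Rightarrow> 'x omega \<Rightarrow> bool) \<Rightarrow> bool" where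
  "seqtest_valid S \<Q> \<alpha> psi \<longleftrightarrow> adapted_F S (count_space UNIV) psi \<and>
     (\<forall>\<tau> Q. stopping_time_F S \<tau> \<longrightarrow> Q \<in> \<Q> \<longrightarrow> measure Q {\<omega> \<in> space Q. psi_at psi \<tau> \<omega>} \<le> \<alpha>)"

definition pval_admissible :: "'x measure \<Rightarrow> 'x omega measure set \<Rightarrow> (nat \<Rightarrow> 'x omega \<Rightarrow> real) \<Rightarrow> bool" where
  "pval_admissible S \<Q> p \<longleftrightarrow> pval_valid S \<Q> p \<and>
     \<not> (\<exists>p'. pval_valid S \<Q> p' \<and>
          (\<forall>t. \<forall>Q\<in>\<Q>. measure Q {\<omega> \<in> space Q. p' t \<omega> \<le> p t \<omega>} = 1) \<and>
          (\<exists>t. \<exists>Q\<in>\<Q>. measure Q {\<omega> \<in> space Q. p' t \<omega> < p t \<omega>} > 0))"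

definition eval_admissible :: "'x measure \<Rightarrow> 'x omega measure set \<Rightarrow> (nat \<Rightarrow> 'x omega \<Rightarrow> ennreal) \<Rightarrow> bool" where
  "eval_admissible S \<Q> e \<longleftrightarrow> eval_valid S \<Q> e \<and>
     \<not> (\<exists>e'. eval_valid S \<Q> e' \<and>
          (\<forall>t. \<forall>Q\<in>\<Q>. measure Q {\<omega> \<in> space Q. e' t \<omega> \<ge> e t \<omega>} = 1) \<and>
          (\<exists>t. \<exists>Q\<in>\<Q>. measure Q {\<omega> \<in> space Q. e' t \<omega> > e t \<omega>} > 0))"

definition seqtest_admissible :: "'x measure \<Rightarrow> 'x omega measure set \<Rightarrow> real \<Rightarrow> (nat \<Rightarrow> 'x omega \<Rightarrow> bool) \<Rightarrow> bool" where
  "seqtest_admissible S \<Q> \<alpha> psi \<longleftrightarrow> seqtest_valid S \<Q> \<alpha> psi \<and>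
     \<not> (\<exists>psi'. seqtest_valid S \<Q> \<alpha> psi' \<and>
          (\<forall>t. \<forall>Q\<in>\<Q>. measure Q {\<omega> \<in> space Q. psi t \<omega> \<longrightarrow> psi' t \<omega>} = 1) \<and>
          (\<exists>t. \<exists>Q\<in>\<Q>. measure Q {\<omega> \<in> space Q. psi' t \<omega> \<and> \<not> psi t \<omega>} > 0))"

end

theory Submission
  imports Defs
begin

text \<open>If a competitor improved on the process for \<open>\<Q>\<close>, the improvement happens at some time
  \<open>t\<close> on an \<open>\<F>\<^sub>t\<close>-event of positive \<open>\<Q>\<close>-mass. By the positivity hypothesis that event has
  positive mass under some \<open>Q\<^sub>i\<close>, while validity and almost-sure dominance pass from \<open>\<Q>\<close> to the
  subfamily \<open>{Q\<^sub>i}\<close>; so the competitor would improve on the process for \<open>Q\<^sub>i\<close> as well.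
  The argument only uses the common shape of the three admissibility notions.\<close>

definition dominance_admissible ::
    "('w measure set \<Rightarrow> 'f \<Rightarrow> bool) \<Rightarrow> ('f \<Rightarrow> 'f \<Rightarrow> nat \<Rightarrow> 'w \<Rightarrow> bool) \<Rightarrow>
     ('f \<Rightarrow> 'f \<Rightarrow> nat \<Rightarrow> 'w \<Rightarrow> bool) \<Rightarrow> 'w measure set \<Rightarrow> 'f \<Rightarrow> bool" where
  "dominance_admissible valid weakly strictly \<Q> f \<longleftrightarrow> valid \<Q> f \<and>
     \<not> (\<exists>f'. valid \<Q> f' \<and>
          (\<forall>t. \<forall>Q\<in>\<Q>. measure Q {\<omega> \<in> space Q. weakly f' f t \<omega>} = 1) \<and>
          (\<exists>t. \<exists>Q\<in>\<Q>. measure Q {\<omega> \<in> space Q. strictly f' f t \<omega>} > 0))"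

lemma dominance_admissible_from_family:
  fixes \<Q> :: "'w measure set" and F :: "nat \<Rightarrow> 'w measure" and Qi :: "'i \<Rightarrow> 'w measure"
  assumes valid_antimono: "\<And>\<Q>' g. valid \<Q> g \<Longrightarrow> \<Q>' \<subseteq> \<Q> \<Longrightarrow> valid \<Q>' g"
    and space_eq: "\<forall>Q\<in>\<Q>. space Q = \<Omega>"
    and fam: "Qi ` I \<subseteq> \<Q>"
    and pos: "\<forall>t A. A \<in> sets (F t) \<longrightarrow> (\<exists>Q\<in>\<Q>. measure Q A > 0) \<longrightarrow>
                (\<exists>i\<in>I. measure (Qi i) A > 0)"
    and strictly_sets: "\<And>f' t. valid \<Q> f' \<Longrightarrow> {\<omega> \<in> \<Omega>. strictly f' f t \<omega>} \<in> sets (F t)"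
    and valid: "valid \<Q> f"
    and admissible_i: "\<forall>i\<in>I. dominance_admissible valid weakly strictly {Qi i} f"
  shows "dominance_admissible valid weakly strictly \<Q> f"
  unfolding dominance_admissible_def
proof (intro conjI notI)
  show "valid \<Q> f" by (fact valid)
next
  assume "\<exists>f'. valid \<Q> f' \<and>
          (\<forall>t. \<forall>Q\<in>\<Q>. measure Q {\<omega> \<in> space Q. weakly f' f t \<omega>} = 1) \<and>
          (\<exists>t. \<exists>Q\<in>\<Q>. measure Q {\<omega> \<in> space Q. strictly f' f t \<omega>} > 0)"
  then obtain f' t Q where valid': "valid \<Q> f'"
    and weakly: "\<forall>t. \<forall>Q\<in>\<Q>. measure Q {\<omega> \<in> space Q. weakly f' f t \<omega>} = 1"
    and Q: "Q \<in> \<Q>" "measure Q {\<omega> \<in> \<Omega>. strictly f' f t \<omega>} > 0"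
    using space_eq by metis
  obtain i where i: "i \<in> I" "measure (Qi i) {\<omega> \<in> \<Omega>. strictly f' f t \<omega>} > 0"
    using pos strictly_sets[OF valid'] Q by blast
  have Qi: "Qi i \<in> \<Q>" "space (Qi i) = \<Omega>"
    using fam i(1) space_eq by auto
  have "valid {Qi i} f'"
    using valid_antimono[OF valid'] Qi(1) by blast
  moreover have "\<forall>t. measure (Qi i) {\<omega> \<in> space (Qi i). weakly f' f t \<omega>} = 1"
    using weakly Qi(1) by blast
  ultimately show False
    using admissible_i i Qi(2) unfolding dominance_admissible_def by auto
qed

lemma pval_admissible_eq_dominance_admissible:
  "pval_admissible S \<Q> p = dominance_admissible (pval_valid S)
     (\<lambda>p' p t \<omega>. p' t \<omega> \<le> p t \<omega>) (\<lambda>p' p t \<omega>. p' t \<omega> < p t \<omega>) \<Q> p"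
  unfolding pval_admissible_def dominance_admissible_def ..

lemma eval_admissible_eq_dominance_admissible:
  "eval_admissible S \<Q> e = dominance_admissible (eval_valid S)
     (\<lambda>e' e t \<omega>. e t \<omega> \<le> e' t \<omega>) (\<lambda>e' e t \<omega>. e t \<omega> < e' t \<omega>) \<Q> e"
  unfolding eval_admissible_def dominance_admissible_def ..

lemma seqtest_admissible_eq_dominance_admissible:
  "seqtest_admissible S \<Q> \<alpha> psi = dominance_admissible (\<lambda>\<Q>. seqtest_valid S \<Q> \<alpha>)
     (\<lambda>psi' psi t \<omega>. psi t \<omega> \<longrightarrow> psi' t \<omega>) (\<lambda>psi' psi t \<omega>. psi' t \<omega> \<and> \<not> psi t \<omega>) \<Q> psi"
  unfolding seqtest_admissible_def dominance_admissible_def ..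

lemma pval_valid_antimono: "pval_valid S \<Q> p \<Longrightarrow> \<Q>' \<subseteq> \<Q> \<Longrightarrow> pval_valid S \<Q>' p"
  unfolding pval_valid_def by blast

lemma eval_valid_antimono: "eval_valid S \<Q> e \<Longrightarrow> \<Q>' \<subseteq> \<Q> \<Longrightarrow> eval_valid S \<Q>' e"
  unfolding eval_valid_def by blast

lemma seqtest_valid_antimono:
  "seqtest_valid S \<Q> \<alpha> psi \<Longrightarrow> \<Q>' \<subseteq> \<Q> \<Longrightarrow> seqtest_valid S \<Q>' \<alpha> psi"
  unfolding seqtest_valid_def by blast

lemma space_filt: "space (filt S t) = space (Omega S)"
  unfolding filt_def by simp

lemma space_model_measure: "model_measure S Q \<Longrightarrow> space Q = space (Omega S)"
proof -
  assume "model_measure S Q"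
  then have "space Q = space (filt_inf S)"
    unfolding model_measure_def using sets_eq_imp_space_eq by blast
  then show ?thesis
    unfolding filt_inf_def by (simp add: space_measure_of_conv)
qed

lemma sets_filt_Collect:
  "Measurable.pred (filt S t) P \<Longrightarrow> {\<omega> \<in> space (Omega S). P \<omega>} \<in> sets (filt S t)"
  using pred_def space_filt by metis

lemma pval_strictly_smaller_sets:
  assumes "pval_valid S \<Q> p" "pval_valid S \<Q>' p'"
  shows "{\<omega> \<in> space (Omega S). p' t \<omega> < p t \<omega>} \<in> sets (filt S t)"
proof (rule sets_filt_Collect)
  have [measurable]: "p t \<in> borel_measurable (filt S t)" "p' t \<in> borel_measurable (filt S t)"
    using assms unfolding pval_valid_def adapted_F_def by auto
  show "Measurable.pred (filt S t) (\<lambda>\<omega>. p' t \<omega> < p t \<omega>)" by measurable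
qed

lemma eval_strictly_larger_sets:
  assumes "eval_valid S \<Q> e" "eval_valid S \<Q>' e'"
  shows "{\<omega> \<in> space (Omega S). e t \<omega> < e' t \<omega>} \<in> sets (filt S t)"
proof (rule sets_filt_Collect)
  have [measurable]: "e t \<in> borel_measurable (filt S t)" "e' t \<in> borel_measurable (filt S t)"
    using assms unfolding eval_valid_def adapted_F_def by auto
  show "Measurable.pred (filt S t) (\<lambda>\<omega>. e t \<omega> < e' t \<omega>)" by measurable
qed

lemma seqtest_strictly_more_rejecting_sets:
  assumes "seqtest_valid S \<Q> \<alpha> psi" "seqtest_valid S \<Q>' \<alpha>' psi'"
  shows "{\<omega> \<in> space (Omega S). psi' t \<omega> \<and> \<not> psi t \<omega>} \<in> sets (filt S t)"
proof (rule sets_filt_Collect)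
  have [measurable]: "Measurable.pred (filt S t) (psi t)" "Measurable.pred (filt S t) (psi' t)"
    using assms unfolding seqtest_valid_def adapted_F_def by auto
  show "Measurable.pred (filt S t) (\<lambda>\<omega>. psi' t \<omega> \<and> \<not> psi t \<omega>)" by measurable
qed

theorem proposition10:
  fixes S :: "'x measure" and \<Q> :: "'x omega measure set"
    and I :: "'i set" and Qi :: "'i \<Rightarrow> 'x omega measure"
  assumes model: "\<forall>Q\<in>\<Q>. model_measure S Q"
    and fam: "Qi ` I \<subseteq> \<Q>"
    and pos: "\<forall>t A. A \<in> sets (filt S t) \<longrightarrow> (\<exists>Q\<in>\<Q>. measure Q A > 0) \<longrightarrow>
                 (\<exists>i\<in>I. measure (Qi i) A > 0)"
  shows "(\<forall>p. pval_valid S \<Q> p \<and> (\<forall>i\<in>I. pval_admissible S {Qi i} p)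
               \<longrightarrow> pval_admissible S \<Q> p)
       \<and> (\<forall>e. eval_valid S \<Q> e \<and> (\<forall>i\<in>I. eval_admissible S {Qi i} e)
               \<longrightarrow> eval_admissible S \<Q> e)
       \<and> (\<forall>\<alpha> psi. seqtest_valid S \<Q> \<alpha> psi \<and> (\<forall>i\<in>I. seqtest_admissible S {Qi i} \<alpha> psi)
               \<longrightarrow> seqtest_admissible S \<Q> \<alpha> psi)"
proof -
  have space_eq: "\<forall>Q\<in>\<Q>. space Q = space (Omega S)"
    using model space_model_measure by blast
  note from_family = dominance_admissible_from_family[OF _ space_eq fam pos]
  show ?thesis
    unfolding pval_admissible_eq_dominance_admissible eval_admissible_eq_dominance_admissible
      seqtest_admissible_eq_dominance_admissible
    by (intro conjI allI impI; elim conjE; rule from_family)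
      (auto intro: pval_valid_antimono eval_valid_antimono seqtest_valid_antimono
        pval_strictly_smaller_sets eval_strictly_larger_sets seqtest_strictly_more_rejecting_sets)
qed

end
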